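(* For every $X\in\mathfrak g$, with $x^{(-1)}_N$ denoting the coefficient of $\lambda^{-1}E_{N,1}$ (i.e. of $\lambda^{-1}E_{N,N+1}$) in $X$, ${\rm A}_2(\mathcal FX)+{\rm S}^*(X\mathcal F)=\mathcal F\,{\rm R}(X)-2\alpha x_N^{(-1)}I$ and ${\rm A}_1(X\mathcal F)+{\rm S}(\mathcal FX)={\rm R}(X)\,\mathcal F-2\alpha x_N^{(-1)}I$.
   Context: Periodic lattice setting: $N\ge2$; $\mathfrak g=\{X(\lambda)\in gl(N)[\lambda,\lambda^{-1}]:\Omega X(\lambda)\Omega^{-1}=X(\omega\lambda)\}$, $\omega=e^{2\pi i/N}$, $\Omega=\mathrm{diag}(1,\omega,\dots,\omega^{N-1})$, matrix indices modulo $N$. $\mathfrak g_p$ = elements $\lambda^p\sum_{j-k\equiv p\,(\mathrm{mod}\,N)}x_{jk}E_{jk}$; $P_0,P_{>0},P_{\ge0},P_{<0}$ the projections onto $\mathfrak g_0$, $\oplus_{p>0}\mathfrak g_p$, $\oplus_{p\ge0}\mathfrak g_p$, $\oplus_{p<0}\mathfrak g_p$. ${\rm R}=P_{\ge0}-P_{<0}$, ${\rm R}_0=P_{>0}-P_{<0}$. $W$ is linear with $W=W\circ P_0$ and $W(E_{kk})=\sum_{j=1}^N\mathrm{sgn}(k-j)E_{jj}$. ${\rm A}_1={\rm R}_0+W$, ${\rm A}_2={\rm R}_0-W$, ${\rm S}=P_0-W$, ${\rm S}^*=P_0+W$. $\alpha$ real, $\mathcal F=I-\alpha\lambda\sum_{k=1}^NE_{k+1,k}$.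 *)

theory Defs
  imports Complex_Main "HOL-Library.Function_Algebras"
begin

text \<open>Elements of gl(N)[lambda, lambda^-1] are represented as coefficient functions
  X p j k = coefficient of lambda^p at matrix entry (j,k); matrix indices are
  0-based (0..N-1), i.e. paper index i corresponds to i-1 here.\<close>

type_synonym lmat = "int \<Rightarrow> nat \<Rightarrow> nat \<Rightarrow> complex"

definition omega :: "nat \<Rightarrow> complex" where
  "omega N = cis (2 * pi / real N)"

text \<open>The twisted loop algebra g: finitely many powers of lambda, N x N coefficients,
  and Omega X(lambda) Omega^-1 = X(omega lambda) compared coefficientwise.\<close>
definition loop_alg :: "nat \<Rightarrow> lmat set" where
  "loop_alg N = {X. finite {p. \<exists>j k. X p j k \<noteq> 0}
      \<and> (\<forall>p j k. (N \<le> j \<or> N \<le> k) \<longrightarrow> X p j k = 0)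
      \<and> (\<forall>p j k. j < N \<longrightarrow> k < N \<longrightarrow>
            omega N ^ j * X p j k * inverse (omega N ^ k) = omega N powi p * X p j k)}"

definition lmul :: "nat \<Rightarrow> lmat \<Rightarrow> lmat \<Rightarrow> lmat" where
  "lmul N X Y = (\<lambda>p j k. \<Sum>a\<in>{a. \<exists>j k. X a j k \<noteq> 0}. \<Sum>l<N. X a j l * Y (p - a) l k)"

definition proj :: "int set \<Rightarrow> lmat \<Rightarrow> lmat" where
  "proj S X = (\<lambda>p j k. if p \<in> S then X p j k else 0)"

definition P0 :: "lmat \<Rightarrow> lmat" where "P0 = proj {0}"
definition Ppos :: "lmat \<Rightarrow> lmat" where "Ppos = proj {0<..}"
definition Pnn :: "lmat \<Rightarrow> lmat" where "Pnn = proj {0..}"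
definition Pneg :: "lmat \<Rightarrow> lmat" where "Pneg = proj {..<0}"

definition Rop :: "lmat \<Rightarrow> lmat" where "Rop X = Pnn X - Pneg X"
definition R0op :: "lmat \<Rightarrow> lmat" where "R0op X = Ppos X - Pneg X"

text \<open>W: linear, W = W o P_0, W(E_kk) = sum_j sgn(k-j) E_jj.  On g_0 (diagonal
  constant matrices) this gives the diagonal entry at j equal to
  sum_k sgn(k-j) x_kk.\<close>
definition Wop :: "nat \<Rightarrow> lmat \<Rightarrow> lmat" where
  "Wop N X = (\<lambda>p j k. if p = 0 \<and> j = k \<and> j < N
      then (\<Sum>i<N. of_int (sgn (int i - int j)) * P0 X 0 i i) else 0)"

definition A1 :: "nat \<Rightarrow> lmat \<Rightarrow> lmat" where "A1 N X = R0op X + Wop N X"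
definition A2 :: "nat \<Rightarrow> lmat \<Rightarrow> lmat" where "A2 N X = R0op X - Wop N X"
definition Sop :: "nat \<Rightarrow> lmat \<Rightarrow> lmat" where "Sop N X = P0 X - Wop N X"
definition Sstar :: "nat \<Rightarrow> lmat \<Rightarrow> lmat" where "Sstar N X = P0 X + Wop N X"

definition scalI :: "nat \<Rightarrow> complex \<Rightarrow> lmat" where
  "scalI N c = (\<lambda>p j k. if p = 0 \<and> j = k \<and> j < N then c else 0)"

definition Fmat :: "nat \<Rightarrow> real \<Rightarrow> lmat" where
  "Fmat N \<alpha> = (\<lambda>p j k. if j < N \<and> k < N then
      (if p = 0 \<and> j = k then 1
       else if p = 1 \<and> j = (k + 1) mod N then - complex_of_real \<alpha> else 0) else 0)"

end

theory Submission
  imports Defs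
begin

(* Multiplying by F = I - alpha lambda sum_k E_(k+1,k) moves coefficients up by at most one degree.
   Since R has sign +1 in degree 0, F R(X) and R(X) F agree with R_0 applied to FX and XF
   in every degree p <> 0, and both identities are only a statement about degree 0.
   There the twisting condition confines the lambda^(-1) coefficient of X to the cyclic
   superdiagonal x_i = X_(i,i+1)^(-1), so (XF)_0 and (FX)_0 differ by the diagonal matrix
   alpha (x_(i-1) - x_i), and W of it is the telescoping sum
   sum_i sgn(i - j) (x_(i-1) - x_i) = x_j + x_(j-1) - 2 x_N, whose last term is the
   scalar correction -2 alpha x_N I. *)

definition cyc_pred :: "nat \<Rightarrow> nat \<Rightarrow> nat" where
  "cyc_pred N j = (if j = 0 then N - 1 else j - 1)"

(* The paper's x_(i+1)^(-1), i.e. the coefficient of lambda^(-1) E_(i+1,i+2) in 1-based indexing. *)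
definition coeff_minus1 :: "nat \<Rightarrow> lmat \<Rightarrow> nat \<Rightarrow> complex" where
  "coeff_minus1 N X i = X (-1) i (Suc i mod N)"

lemma cyc_pred_less: "j < N \<Longrightarrow> cyc_pred N j < N"
  by (auto simp: cyc_pred_def)

lemma Suc_cyc_pred_mod: "j < N \<Longrightarrow> Suc (cyc_pred N j) mod N = j"
  by (auto simp: cyc_pred_def)

lemma eq_Suc_mod_iff_cyc_pred: "l < N \<Longrightarrow> j < N \<Longrightarrow> j = Suc l mod N \<longleftrightarrow> l = cyc_pred N j"
  by (cases "Suc l = N") (auto simp: cyc_pred_def)

lemma Suc_mod_inj: "j < N \<Longrightarrow> k < N \<Longrightarrow> Suc j mod N = Suc k mod N \<Longrightarrow> j = k"
  by (metis eq_Suc_mod_iff_cyc_pred mod_less_divisor zero_less_iff_neq_zero not_less0)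

lemma loop_alg_finite_support: "X \<in> loop_alg N \<Longrightarrow> finite {a. \<exists>j k. X a j k \<noteq> 0}"
  by (simp add: loop_alg_def)

lemma loop_alg_coeff_outside: "X \<in> loop_alg N \<Longrightarrow> N \<le> j \<or> N \<le> k \<Longrightarrow> X p j k = 0"
  by (auto simp: loop_alg_def)

lemma omega_power_int_eq_1_imp_dvd:
  assumes "N > 0" and "omega N powi m = 1"
  shows "int N dvd m"
proof -
  have "cis (of_int m * (2 * pi / N)) = 1"
    using assms(2) by (simp add: omega_def cis_power_int)
  then have "cos (of_int m * (2 * pi / N)) = 1"
    by (simp add: complex_eq_iff)
  then obtain n :: int where "of_int m * (2 * pi / N) = of_int n * 2 * pi"
    by (auto simp: cos_one_2pi_int)
  then have "real_of_int m = real_of_int (n * int N)"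
    using assms(1) by (simp add: field_simps)
  then show ?thesis
    by (simp only: of_int_eq_iff) simp
qed

lemma loop_alg_coeff_nonzero_dvd:
  assumes "X \<in> loop_alg N" "j < N" "k < N" "X p j k \<noteq> 0"
  shows "int N dvd (int j - int k - p)"
proof (rule omega_power_int_eq_1_imp_dvd)
  show "N > 0" using assms(2) by simp
  have "omega N ^ j * X p j k * inverse (omega N ^ k) = omega N powi p * X p j k"
    using assms(1-3) unfolding loop_alg_def by blast
  then have "omega N powi (int j - int k) = omega N powi p"
    using assms(4) by (simp add: power_int_diff omega_def divide_inverse mult_ac)
  then show "omega N powi (int j - int k - p) = 1"
    by (simp add: power_int_diff omega_def)
qed

lemma loop_alg_coeff_minus1_nonzero:
  assumes "X \<in> loop_alg N" "j < N" "k < N" "X (-1) j k \<noteq> 0"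
  shows "k = Suc j mod N"
proof -
  have "int N dvd (int (Suc j) - int k)"
    using loop_alg_coeff_nonzero_dvd[OF assms] by (simp add: algebra_simps)
  then have "int (Suc j) mod int N = int k mod int N"
    by (simp add: mod_eq_dvd_iff)
  then have "int (Suc j mod N) = int k"
    using assms(3) by (simp add: zmod_int)
  then show ?thesis
    by simp
qed

lemma loop_alg_coeff_minus1_Suc_mod:
  assumes "X \<in> loop_alg N" "j < N" "k < N"
  shows "X (-1) j (Suc k mod N) = (if j = k then coeff_minus1 N X j else 0)"
proof (cases "j = k")
  case False
  then have "Suc k mod N \<noteq> Suc j mod N"
    using Suc_mod_inj[of j N k] assms(2,3) by auto
  then show ?thesis
    using loop_alg_coeff_minus1_nonzero[OF assms(1,2), of "Suc k mod N"] assms(2) False by auto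
qed (simp add: coeff_minus1_def)

lemma loop_alg_coeff_minus1_cyc_pred:
  assumes "X \<in> loop_alg N" "j < N" "k < N"
  shows "X (-1) (cyc_pred N j) k = (if j = k then coeff_minus1 N X (cyc_pred N j) else 0)"
  using loop_alg_coeff_minus1_nonzero[OF assms(1) cyc_pred_less[OF assms(2)] assms(3)] assms
  by (auto simp: coeff_minus1_def Suc_cyc_pred_mod)

lemma lmul_eq_sum_superset:
  assumes "finite T" "{a. \<exists>j k. X a j k \<noteq> 0} \<subseteq> T"
  shows "lmul N X Y p j k = (\<Sum>a\<in>T. \<Sum>l<N. X a j l * Y (p - a) l k)"
  unfolding lmul_def by (rule sum.mono_neutral_left) (use assms in auto)

lemma lmul_Fmat_left:
  "lmul N (Fmat N \<alpha>) Y p j k = (if j < N then Y p j k - \<alpha> * Y (p - 1) (cyc_pred N j) k else 0)"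
proof -
  have "lmul N (Fmat N \<alpha>) Y p j k = (\<Sum>a\<in>{0, 1}. \<Sum>l<N. Fmat N \<alpha> a j l * Y (p - a) l k)"
    by (rule lmul_eq_sum_superset) (auto simp: Fmat_def split: if_splits)
  also have "\<dots> = (\<Sum>l<N. (if l = j \<and> j < N then Y p l k else 0)
      + (if l = cyc_pred N j \<and> j < N then - \<alpha> * Y (p - 1) l k else 0))"
    by (auto simp: Fmat_def sum.distrib[symmetric] eq_Suc_mod_iff_cyc_pred intro!: sum.cong)
  also have "\<dots> = (if j < N then Y p j k - \<alpha> * Y (p - 1) (cyc_pred N j) k else 0)"
    by (simp add: sum.distrib cyc_pred_less)
  finally show ?thesis .
qed

lemma lmul_Fmat_right:
  assumes "finite {a. \<exists>j k. Y a j k \<noteq> 0}"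
  shows "lmul N Y (Fmat N \<alpha>) p j k = (if k < N then Y p j k - \<alpha> * Y (p - 1) j (Suc k mod N) else 0)"
proof -
  let ?h = "\<lambda>a. \<Sum>l<N. Y a j l * Fmat N \<alpha> (p - a) l k"
  have "lmul N Y (Fmat N \<alpha>) p j k = (\<Sum>a\<in>{a. \<exists>j k. Y a j k \<noteq> 0} \<union> {p, p - 1}. ?h a)"
    by (rule lmul_eq_sum_superset) (use assms in auto)
  also have "\<dots> = (\<Sum>a\<in>{p, p - 1}. ?h a)"
  proof (rule sum.mono_neutral_right)
    have "?h a = 0" if "a \<noteq> p" "a \<noteq> p - 1" for a
    proof -
      have "p - a \<noteq> 0" "p - a \<noteq> 1"
        using that by auto
      then have "Fmat N \<alpha> (p - a) l k = 0" for l
        unfolding Fmat_def by presburger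
      then show ?thesis
        by simp
    qed
    then show "\<forall>a\<in>{a. \<exists>j k. Y a j k \<noteq> 0} \<union> {p, p - 1} - {p, p - 1}. ?h a = 0"
      by blast
  qed (use assms in auto)
  also have "\<dots> = ?h p + ?h (p - 1)"
    by simp
  also have "\<dots> = (if k < N then Y p j k - \<alpha> * Y (p - 1) j (Suc k mod N) else 0)"
    by (cases "k < N") (simp_all add: Fmat_def if_distrib[of "\<lambda>x. _ * x"] sum.delta' cong: if_cong)
  finally show ?thesis .
qed

lemma sum_lessThan_cyc_pred_telescope:
  fixes x :: "nat \<Rightarrow> 'a::ab_group_add"
  assumes "j < N"
  shows "(\<Sum>i<j. x (cyc_pred N i) - x i) = x (N - 1) - x (cyc_pred N j)"
proof (cases j)
  case (Suc m)
  have "(\<Sum>i<Suc m. x (cyc_pred N i) - x i) = (x (N - 1) - x 0) + (\<Sum>i<m. x i - x (Suc i))"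
    by (subst sum.lessThan_Suc_shift) (simp add: cyc_pred_def)
  then show ?thesis
    using Suc by (simp add: sum_lessThan_telescope' cyc_pred_def)
qed (simp add: cyc_pred_def)

lemma sum_greaterThan_cyc_pred_telescope:
  fixes x :: "nat \<Rightarrow> 'a::ab_group_add"
  assumes "j < N"
  shows "(\<Sum>i\<in>{j<..<N}. x (cyc_pred N i) - x i) = x j - x (N - 1)"
proof -
  have "{j<..<N} = {Suc j..N - 1}"
    using assms by auto
  then have "(\<Sum>i\<in>{j<..<N}. x (cyc_pred N i) - x i) = (\<Sum>i\<in>{Suc j..N - 1}. - (x i - x (i - 1)))"
    by (auto simp: cyc_pred_def intro: sum.cong)
  also have "\<dots> = - (x (N - 1) - x j)"
    using assms by (simp only: sum_negf sum_telescope'')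
  finally show ?thesis
    by simp
qed

lemma sum_sgn_cyc_pred_telescope:
  fixes x :: "nat \<Rightarrow> 'a::ring_1"
  assumes "j < N"
  shows "(\<Sum>i<N. of_int (sgn (int i - int j)) * (x (cyc_pred N i) - x i))
    = x j + x (cyc_pred N j) - 2 * x (N - 1)"
proof -
  let ?d = "\<lambda>i. x (cyc_pred N i) - x i"
  have "(\<Sum>i<N. of_int (sgn (int i - int j)) * ?d i)
      = (\<Sum>i<N. if j < i then ?d i else 0) - (\<Sum>i<N. if i < j then ?d i else 0)"
    by (auto simp: sum_subtractf[symmetric] sgn_if intro: sum.cong)
  also have "\<dots> = (\<Sum>i\<in>{j<..<N}. ?d i) - (\<Sum>i<j. ?d i)"
  proof -
    have "{i \<in> {..<N}. j < i} = {j<..<N}" "{i \<in> {..<N}. i < j} = {..<j}"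
      using assms by auto
    then show ?thesis
      by (simp flip: sum.inter_filter)
  qed
  also have "\<dots> = x j + x (cyc_pred N j) - 2 * x (N - 1)"
    using assms
    by (simp add: sum_greaterThan_cyc_pred_telescope sum_lessThan_cyc_pred_telescope mult_2)
  finally show ?thesis .
qed

lemma Wop_apply:
  "Wop N Y p j k = (if p = 0 \<and> j = k \<and> j < N
     then (\<Sum>i<N. of_int (sgn (int i - int j)) * Y 0 i i) else 0)"
  by (simp add: Wop_def P0_def proj_def)

lemma Wop_lmul_Fmat_swap:
  assumes "finite {a. \<exists>j k. X a j k \<noteq> 0}"
  shows "Wop N (lmul N X (Fmat N \<alpha>)) p j k = Wop N (lmul N (Fmat N \<alpha>) X) p j k
    + (if p = 0 \<and> j = k \<and> j < N then \<alpha> * (coeff_minus1 N X j + coeff_minus1 N X (cyc_pred N j)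
         - 2 * coeff_minus1 N X (N - 1)) else 0)"
proof (cases "p = 0 \<and> j = k \<and> j < N")
  case True
  let ?x = "coeff_minus1 N X"
  have diag: "lmul N X (Fmat N \<alpha>) 0 i i = lmul N (Fmat N \<alpha>) X 0 i i + \<alpha> * (?x (cyc_pred N i) - ?x i)"
    if "i < N" for i
    using that by (simp add: lmul_Fmat_left lmul_Fmat_right[OF assms] coeff_minus1_def
        Suc_cyc_pred_mod cyc_pred_less algebra_simps)
  have "(\<Sum>i<N. of_int (sgn (int i - int j)) * lmul N X (Fmat N \<alpha>) 0 i i)
      = (\<Sum>i<N. of_int (sgn (int i - int j)) * lmul N (Fmat N \<alpha>) X 0 i i
          + \<alpha> * (of_int (sgn (int i - int j)) * (?x (cyc_pred N i) - ?x i)))"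
    by (intro sum.cong) (simp_all add: diag distrib_left mult.left_commute)
  then have "Wop N (lmul N X (Fmat N \<alpha>)) p j k = Wop N (lmul N (Fmat N \<alpha>) X) p j k
      + \<alpha> * (\<Sum>i<N. of_int (sgn (int i - int j)) * (?x (cyc_pred N i) - ?x i))"
    using True by (simp add: Wop_apply sum.distrib sum_distrib_left)
  then show ?thesis
    using True by (simp add: sum_sgn_cyc_pred_telescope)
qed (auto simp: Wop_apply)

lemma finite_support_Rop:
  "finite {a. \<exists>j k. X a j k \<noteq> 0} \<Longrightarrow> finite {a. \<exists>j k. Rop X a j k \<noteq> 0}"
  by (rule finite_subset[rotated]) (auto simp: Rop_def Pnn_def Pneg_def proj_def)

lemma A2_Sstar_Fmat_apply:
  assumes X: "X \<in> loop_alg N"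
  shows "(A2 N (lmul N (Fmat N \<alpha>) X) + Sstar N (lmul N X (Fmat N \<alpha>))) p j k
       = (lmul N (Fmat N \<alpha>) (Rop X) - scalI N (2 * \<alpha> * coeff_minus1 N X (N - 1))) p j k"
  using loop_alg_coeff_outside[OF X]
  by (cases "p = 0")
     (auto simp: A2_def R0op_def Ppos_def Pneg_def Sstar_def P0_def proj_def Rop_def Pnn_def
       scalI_def lmul_Fmat_left lmul_Fmat_right[OF loop_alg_finite_support[OF X]]
       Wop_lmul_Fmat_swap[OF loop_alg_finite_support[OF X]]
       loop_alg_coeff_minus1_Suc_mod[OF X] loop_alg_coeff_minus1_cyc_pred[OF X] algebra_simps)

lemma A1_Sop_Fmat_apply:
  assumes X: "X \<in> loop_alg N"
  shows "(A1 N (lmul N X (Fmat N \<alpha>)) + Sop N (lmul N (Fmat N \<alpha>) X)) p j k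
       = (lmul N (Rop X) (Fmat N \<alpha>) - scalI N (2 * \<alpha> * coeff_minus1 N X (N - 1))) p j k"
  using loop_alg_coeff_outside[OF X] loop_alg_finite_support[OF X]
  by (cases "p = 0")
     (auto simp: A1_def R0op_def Ppos_def Pneg_def Sop_def P0_def proj_def Rop_def Pnn_def
       scalI_def lmul_Fmat_left lmul_Fmat_right finite_support_Rop Wop_lmul_Fmat_swap
       loop_alg_coeff_minus1_Suc_mod[OF X] loop_alg_coeff_minus1_cyc_pred[OF X] algebra_simps)

theorem mainTheorem8:
  fixes N :: nat and \<alpha> :: real and X :: lmat
  assumes "N \<ge> 2" and "X \<in> loop_alg N"
  shows "A2 N (lmul N (Fmat N \<alpha>) X) + Sstar N (lmul N X (Fmat N \<alpha>))
           = lmul N (Fmat N \<alpha>) (Rop X) - scalI N (2 * complex_of_real \<alpha> * X (-1) (N - 1) 0)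
       \<and> A1 N (lmul N X (Fmat N \<alpha>)) + Sop N (lmul N (Fmat N \<alpha>) X)
           = lmul N (Rop X) (Fmat N \<alpha>) - scalI N (2 * complex_of_real \<alpha> * X (-1) (N - 1) 0)"
proof -
  have "X (-1) (N - 1) 0 = coeff_minus1 N X (N - 1)"
    using assms(1) by (simp add: coeff_minus1_def)
  then show ?thesis
    using A2_Sstar_Fmat_apply[OF assms(2)] A1_Sop_Fmat_apply[OF assms(2)] by (simp add: fun_eq_iff)
qed

end
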